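(* For every positive integer $n$, as formal power series in $z$, \[ \sum_{k \geq 0} \overline{{ n+k-1 \brack k}}_{q,t} z^k q^k = \sum_{k \geq 0} \frac{z^k q^{k^2+k} (-t zq^2;q)_{k}}{(zq;q)_{k+1}} \left( \overline{{ n-1 \brack k}}_{q,t} +t z q^{2k+2} \overline{{ n-2 \brack k}}_{q,t} \right). \]
   Context: An overpartition is a partition in which the last occurrence of each distinct part size may be overlined; its weight $|\lambda|$ is the sum of its parts. For integers $a,b$ with $0\le b\le a$, $\overline{{a \brack b}}_{q,t}=\sum_{\lambda} t^{\#_o(\lambda)} q^{|\lambda|}$, the sum over all overpartitions $\lambda$ with largest part at most $a-b$ and at most $b$ parts, $\#_o(\lambda)$ being the number of overlined parts; for all other integer pairs $(a,b)$ it is $0$. Notation: $(x;q)_k=\prod_{j=1}^{k}(1-xq^{j-1})$, $(x;q)_0=1$. *)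

theory Defs
  imports "HOL-Computational_Algebra.Formal_Power_Series" "HOL-Library.Multiset"
begin

text \<open>An overpartition is encoded as a pair (M, S): M is the multiset of parts
(positive integers), S is the set of part sizes whose last occurrence is overlined
(S a subset of the distinct parts).\<close>

definition overpartitions_bounded :: "nat \<Rightarrow> nat \<Rightarrow> (nat multiset \<times> nat set) set" where
  "overpartitions_bounded m b =
     {(M, S). set_mset M \<subseteq> {1..m} \<and> size M \<le> b \<and> S \<subseteq> set_mset M}"

definition ovgauss :: "'a::comm_ring_1 \<Rightarrow> 'a \<Rightarrow> int \<Rightarrow> int \<Rightarrow> 'a" where
  "ovgauss q t a b =
     (if 0 \<le> b \<and> b \<le> a then
        (\<Sum>(M, S)\<in>overpartitions_bounded (nat (a - b)) (nat b). t ^ card S * q ^ sum_mset M)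
      else 0)"

definition qpoch :: "'a::comm_ring_1 \<Rightarrow> 'a \<Rightarrow> nat \<Rightarrow> 'a" where
  "qpoch x q k = (\<Prod>j<k. (1 - x * q ^ j))"

end

theory Submission
  imports Defs
begin

text \<open>Write \<open>H(r,k)\<close> for the weighted count of overpartitions with parts at most \<open>r\<close> and at
  most \<open>k\<close> parts, so that the overpartition Gaussian coefficient \<open>[a,b]\<close> is \<open>H(a-b,b)\<close>.
  Sorting overpartitions by the largest admissible part \<open>r+1\<close> (absent, present but not
  overlined, overlined) gives \<open>H(r+1,k+1) = H(r,k+1) + q^(r+1) (H(r+1,k) + t H(r,k))\<close>, and an
  induction on \<open>r\<close> and \<open>k\<close> turns this into the conjugate recurrence
  \<open>H(r+1,k+1) = H(r+1,k) + q^(k+1) (H(r,k+1) + t H(r,k))\<close>.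

  The first recurrence is a functional equation for \<open>F_m(z) = \<Sum>_N H(m,N) z^N\<close> and yields
  \<open>(z;q)_(m+1) F_m(z) = (-tzq;q)_m\<close>. The conjugate one drives an induction on \<open>m\<close> proving the
  polynomial identity
  \<open>(-twq;q)_m = \<Sum>_(k\<le>m) w^k q^(k^2) (-twq;q)_k (wq^(k+1);q)_(m-k) ([m,k] + t w q^(2k+1) [m-1,k])\<close>.
  For \<open>n = m+1\<close> and \<open>w = zq\<close>, division by \<open>(zq;q)_(m+1)\<close> turns the right-hand side into the
  series of the theorem, which is a finite sum because its terms vanish for \<open>k > m\<close>, and the
  left-hand side into \<open>F_m(zq)\<close>.\<close>

definition ovp_weight :: "'a::comm_ring_1 \<Rightarrow> 'a \<Rightarrow> nat multiset \<times> nat set \<Rightarrow> 'a" where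
  "ovp_weight q t = (\<lambda>(M, S). t ^ card S * q ^ sum_mset M)"

definition ovbox :: "'a::comm_ring_1 \<Rightarrow> 'a \<Rightarrow> nat \<Rightarrow> nat \<Rightarrow> 'a" where
  "ovbox q t r k = (\<Sum>p\<in>overpartitions_bounded r k. ovp_weight q t p)"

lemma finite_overpartitions_bounded: "finite (overpartitions_bounded r k)"
proof -
  have "{M. set_mset M \<subseteq> {1..r} \<and> size M \<le> k} = (\<Union>n\<le>k. multisets_of_size {1..r} n)"
    by (auto simp: multisets_of_size_def)
  then have "finite {M. set_mset M \<subseteq> {1..r} \<and> size M \<le> k}"
    by auto
  moreover have "overpartitions_bounded r k
      \<subseteq> {M. set_mset M \<subseteq> {1..r} \<and> size M \<le> k} \<times> Pow {1..r}"
    by (auto simp: overpartitions_bounded_def)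
  ultimately show ?thesis
    by (meson finite_Pow_iff finite_SigmaI finite_atLeastAtMost finite_subset)
qed

lemma ovbox_0_left [simp]: "ovbox q t 0 k = 1"
proof -
  have "overpartitions_bounded 0 k = {({#}, {})}"
    by (auto simp: overpartitions_bounded_def)
  then show ?thesis
    by (simp add: ovbox_def ovp_weight_def)
qed

lemma ovbox_0_right [simp]: "ovbox q t r 0 = 1"
proof -
  have "overpartitions_bounded r 0 = {({#}, {})}"
    by (auto simp: overpartitions_bounded_def)
  then show ?thesis
    by (simp add: ovbox_def ovp_weight_def)
qed

lemma overpartitions_bounded_without_largest:
  "{p \<in> overpartitions_bounded (Suc r) k. Suc r \<notin># fst p} = overpartitions_bounded r k"
  by (auto simp: overpartitions_bounded_def le_Suc_eq subset_iff)

lemma sum_ovp_weight_overlined: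
  "(\<Sum>p\<in>{p \<in> overpartitions_bounded r k. m \<in> snd p}. ovp_weight q t p)
   = t * (\<Sum>p\<in>{p \<in> overpartitions_bounded r k. m \<in># fst p \<and> m \<notin> snd p}. ovp_weight q t p)"
  unfolding sum_distrib_left
proof (rule sum.reindex_bij_witness[of _ "\<lambda>(M, S). (M, insert m S)" "\<lambda>(M, S). (M, S - {m})"])
  fix p assume p: "p \<in> {p \<in> overpartitions_bounded r k. m \<in> snd p}"
  obtain M S where [simp]: "p = (M, S)" by (cases p)
  have "finite S" "m \<in> S"
    using p by (auto simp: overpartitions_bounded_def intro: finite_subset)
  then have "card S = Suc (card (S - {m}))"
    by (rule card.remove)
  then show "t * ovp_weight q t (case p of (M, S) \<Rightarrow> (M, S - {m})) = ovp_weight q t p"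
    by (simp add: ovp_weight_def)
qed (auto simp: overpartitions_bounded_def)

lemma sum_ovp_weight_add_part:
  assumes "1 \<le> m" "m \<le> r"
  shows "(\<Sum>p\<in>{p \<in> overpartitions_bounded r (Suc k). m \<in># fst p \<and> m \<notin> snd p}. ovp_weight q t p)
    = q ^ m * (\<Sum>p\<in>{p \<in> overpartitions_bounded r k. m \<notin> snd p}. ovp_weight q t p)"
  unfolding sum_distrib_left
proof (rule sum.reindex_bij_witness[of _ "\<lambda>(M, S). (add_mset m M, S)" "\<lambda>(M, S). (M - {#m#}, S)"])
  fix p assume p: "p \<in> {p \<in> overpartitions_bounded r (Suc k). m \<in># fst p \<and> m \<notin> snd p}"
  obtain M S where [simp]: "p = (M, S)" by (cases p)
  have mM: "m \<in># M" and "m \<notin> S" and "S \<subseteq> set_mset M"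
    using p by (auto simp: overpartitions_bounded_def)
  then have "S \<subseteq> set_mset (M - {#m#})"
    by (auto simp: in_diff_count)
  with p mM show "(case p of (M, S) \<Rightarrow> (M - {#m#}, S)) \<in> {p \<in> overpartitions_bounded r k. m \<notin> snd p}"
    by (auto simp: overpartitions_bounded_def size_Diff_singleton dest: in_diffD)
  have "sum_mset M = m + sum_mset (M - {#m#})"
    using sum_mset.add_mset[of m "M - {#m#}"] mM by simp
  then show "q ^ m * ovp_weight q t (case p of (M, S) \<Rightarrow> (M - {#m#}, S)) = ovp_weight q t p"
    by (simp add: ovp_weight_def power_add mult.left_commute)
qed (use assms in \<open>auto simp: overpartitions_bounded_def\<close>)

lemma sum_filter_complement:
  assumes "finite A"
  shows "(\<Sum>x\<in>A. f x) = (\<Sum>x\<in>{x \<in> A. P x}. f x) + (\<Sum>x\<in>{x \<in> A. \<not> P x}. f x)"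
proof -
  have "(\<Sum>x\<in>{x \<in> A. P x} \<union> {x \<in> A. \<not> P x}. f x)
      = (\<Sum>x\<in>{x \<in> A. P x}. f x) + (\<Sum>x\<in>{x \<in> A. \<not> P x}. f x)"
    using assms by (intro sum.union_disjoint) auto
  moreover have "{x \<in> A. P x} \<union> {x \<in> A. \<not> P x} = A"
    by blast
  ultimately show ?thesis
    by simp
qed

lemma ovbox_Suc_Suc_largest_part:
  "ovbox q t (Suc r) (Suc k) = ovbox q t r (Suc k) + q ^ Suc r * (ovbox q t (Suc r) k + t * ovbox q t r k)"
proof -
  let ?P = "overpartitions_bounded (Suc r)"
  define N where "N K = (\<Sum>p\<in>{p \<in> ?P K. Suc r \<notin> snd p}. ovp_weight q t p)" for K
  define B where "B K = (\<Sum>p\<in>{p \<in> ?P K. Suc r \<in># fst p \<and> Suc r \<notin> snd p}. ovp_weight q t p)" for K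
  have split_overlined: "ovbox q t (Suc r) K = N K + t * B K" for K
    using sum_filter_complement[OF finite_overpartitions_bounded[of "Suc r" K],
        where f = "ovp_weight q t" and P = "\<lambda>p. Suc r \<notin> snd p"]
    by (simp add: ovbox_def N_def B_def sum_ovp_weight_overlined)
  have split_occurs: "N K = ovbox q t r K + B K" for K
  proof -
    have finite: "finite {p \<in> ?P K. Suc r \<notin> snd p}"
      using finite_overpartitions_bounded by simp
    have "{p \<in> {p \<in> ?P K. Suc r \<notin> snd p}. Suc r \<notin># fst p} = {p \<in> ?P K. Suc r \<notin># fst p}"
      by (auto simp: overpartitions_bounded_def)
    then have absent: "{p \<in> {p \<in> ?P K. Suc r \<notin> snd p}. Suc r \<notin># fst p} = overpartitions_bounded r K"
      by (simp only: overpartitions_bounded_without_largest)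
    have present: "{p \<in> {p \<in> ?P K. Suc r \<notin> snd p}. \<not> Suc r \<notin># fst p}
        = {p \<in> ?P K. Suc r \<in># fst p \<and> Suc r \<notin> snd p}"
      by blast
    show ?thesis
      using finite absent present unfolding N_def B_def ovbox_def
      by (simp only: sum_filter_complement[of _ _ "\<lambda>p. Suc r \<notin># fst p"])
  qed
  have "B (Suc k) = q ^ Suc r * N k"
    unfolding B_def N_def by (rule sum_ovp_weight_add_part) auto
  then show ?thesis
    using split_overlined[of "Suc k"] split_occurs[of "Suc k"] split_overlined[of k] split_occurs[of k]
    by (simp add: algebra_simps)
qed

text \<open>The two recurrences at the seven lattice points around a corner force the conjugate
  recurrence at the corner; this is the induction step of \<open>ovbox_Suc_Suc_length\<close>.\<close>

lemma recurrence_square_identity: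
  fixes x e g h f a b c d q qr qk t :: "'a::comm_ring_1"
  assumes "x = h + q * qr * (g + t * f)" "g = f + q * qr * (e + t * a)"
    and "h = b + qr * (f + t * c)" "f = c + qr * (a + t * d)"
    and "h = f + q * qk * (b + t * c)" "g = e + qk * (f + t * a)" "f = a + qk * (c + t * d)"
  shows "x = g + q * qk * (h + t * f)"
proof -
  have "x = (f + q * qk * (b + t * c)) + q * qr * ((e + qk * (f + t * a)) + t * (a + qk * (c + t * d)))"
    using assms(1,5-7) by (simp add: algebra_simps)
  also have "\<dots> = (f + q * qr * (e + t * a)) + q * qk * ((b + qr * (f + t * c)) + t * (c + qr * (a + t * d)))"
    by (simp add: algebra_simps)
  also have "\<dots> = g + q * qk * (h + t * f)"
    using assms(2-4) by (simp add: algebra_simps)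
  finally show ?thesis .
qed

lemma ovbox_Suc_Suc_length:
  "ovbox q t (Suc r) (Suc k) = ovbox q t (Suc r) k + q ^ Suc k * (ovbox q t r (Suc k) + t * ovbox q t r k)"
proof (induction r arbitrary: k)
  case 0
  show ?case
  proof (induction k)
    case 0
    show ?case using ovbox_Suc_Suc_largest_part[of q t 0 0] by simp
  next
    case (Suc k)
    then show ?case
      using ovbox_Suc_Suc_largest_part[of q t 0 "Suc k"] ovbox_Suc_Suc_largest_part[of q t 0 k]
      by (simp add: algebra_simps)
  qed
next
  case (Suc r)
  note IH_r = Suc.IH
  show ?case
  proof (induction k)
    case 0
    have "ovbox q t (Suc (Suc r)) 1 = ovbox q t (Suc r) 1 + q * (q ^ Suc r * (1 + t))"
      using ovbox_Suc_Suc_largest_part[of q t "Suc r" 0] by simp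
    also have "\<dots> = ovbox q t (Suc r) 1 + q * (ovbox q t (Suc r) 1 - ovbox q t r 1)"
      using ovbox_Suc_Suc_largest_part[of q t r 0] by simp
    also have "\<dots> = 1 + q * (ovbox q t (Suc r) 1 + t)"
      using IH_r[of 0] by (simp add: algebra_simps)
    finally show ?case
      by simp
  next
    case (Suc k)
    show ?case
      using ovbox_Suc_Suc_largest_part[of q t "Suc r" "Suc k", unfolded power_Suc[of q "Suc r"]]
        ovbox_Suc_Suc_largest_part[of q t "Suc r" k, unfolded power_Suc[of q "Suc r"]]
        ovbox_Suc_Suc_largest_part[of q t r "Suc k"] ovbox_Suc_Suc_largest_part[of q t r k]
        IH_r[of "Suc k", unfolded power_Suc[of q "Suc k"]] Suc.IH IH_r[of k]
      unfolding power_Suc[of q "Suc k"] by (rule recurrence_square_identity)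
  qed
qed

lemma ovgauss_of_nat:
  "ovgauss q t (int a) (int b) = (if b \<le> a then ovbox q t (a - b) b else 0)"
  by (auto simp: ovgauss_def ovbox_def ovp_weight_def nat_diff_distrib)

lemma ovgauss_eq_0: "a < b \<Longrightarrow> ovgauss q t a b = 0"
  by (simp add: ovgauss_def)

lemma ovgauss_0_right: "0 \<le> a \<Longrightarrow> ovgauss q t a 0 = 1"
  using ovgauss_of_nat[of q t "nat a" 0] by simp

lemma ovgauss_diag [simp]: "ovgauss q t (int n) (int n) = 1"
  by (simp add: ovgauss_of_nat)

lemma ovgauss_Suc_Suc:
  "ovgauss q t (int (Suc m)) (int (Suc k)) = ovgauss q t (int m) (int k)
     + q ^ Suc k * (ovgauss q t (int m) (int (Suc k)) + t * ovgauss q t (int m - 1) (int k))"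
proof (cases "k < m")
  case True
  then obtain r where r: "m = Suc (k + r)"
    using less_imp_Suc_add by blast
  have "int m - 1 = int (k + r)"
    by (simp add: r)
  moreover have "ovgauss q t (int (Suc m)) (int (Suc k)) = ovbox q t (Suc r) (Suc k)"
    "ovgauss q t (int m) (int k) = ovbox q t (Suc r) k"
    "ovgauss q t (int m) (int (Suc k)) = ovbox q t r (Suc k)"
    "ovgauss q t (int (k + r)) (int k) = ovbox q t r k"
    by (subst ovgauss_of_nat, simp add: r)+
  ultimately show ?thesis
    by (simp only: ovbox_Suc_Suc_length)
next
  case False
  then show ?thesis
    using ovgauss_diag[of q t "Suc m"] by (cases "k = m") (simp_all add: ovgauss_eq_0)
qed

lemma qpoch_0 [simp]: "qpoch x q 0 = 1"
  by (simp add: qpoch_def)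

lemma qpoch_Suc: "qpoch x q (Suc k) = qpoch x q k * (1 - x * q ^ k)"
  by (simp add: qpoch_def)

lemma qpoch_Suc_shift: "qpoch x q (Suc k) = (1 - x) * qpoch (x * q) q k"
  unfolding qpoch_def prod.lessThan_Suc_shift by (simp add: mult.assoc)

lemma qpoch_add: "qpoch x q (j + k) = qpoch x q j * qpoch (x * q ^ j) q k"
  by (induction k) (simp_all add: qpoch_Suc power_add mult_ac)

lemma qpoch_fps_nth_0:
  fixes x q :: "'a::comm_ring_1 fps"
  assumes "fps_nth x 0 = 0"
  shows "fps_nth (qpoch x q k) 0 = 1"
  using assms by (induction k) (simp_all add: qpoch_Suc)

text \<open>The \<open>k\<close>-th summand of the theorem multiplied by \<open>(zq;q)_(m+1)\<close>, with \<open>w\<close> standing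
  for \<open>zq\<close>.\<close>

definition expansion_coeff :: "'a::comm_ring_1 \<Rightarrow> 'a \<Rightarrow> 'a \<Rightarrow> nat \<Rightarrow> nat \<Rightarrow> 'a" where
  "expansion_coeff q t w m k =
     w ^ k * q ^ k\<^sup>2 * qpoch (- (t * w * q)) q k * qpoch (w * q ^ Suc k) q (m - k)"

lemma expansion_coeff_Suc_Suc:
  "expansion_coeff q t w (Suc m) (Suc j)
     = (1 + t * w * q) * (w * q ^ Suc j) * expansion_coeff q t (w * q) m j"
proof -
  have "(Suc j)\<^sup>2 = j\<^sup>2 + j + Suc j"
    by (simp add: power2_eq_square)
  then have "w ^ Suc j * q ^ (Suc j)\<^sup>2 = w * q ^ Suc j * ((w * q) ^ j * q ^ j\<^sup>2)"
    by (simp add: power_add power_mult_distrib mult_ac)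
  then show ?thesis
    unfolding expansion_coeff_def qpoch_Suc_shift[of "- (t * w * q)"]
    by (simp add: algebra_simps)
qed

lemma expansion_coeff_Suc:
  assumes "j \<le> m"
  shows "q ^ j * (1 + t * w * q ^ Suc j) * expansion_coeff q t w (Suc m) j
     = (1 + t * w * q) * (1 - w * q ^ Suc j) * expansion_coeff q t (w * q) m j"
proof -
  have numerator: "qpoch (- (t * w * q)) q j * (1 + t * w * q ^ Suc j)
      = (1 + t * w * q) * qpoch (- (t * (w * q) * q)) q j"
    using qpoch_Suc[of "- (t * w * q)" q j] qpoch_Suc_shift[of "- (t * w * q)" q j]
    by (simp add: algebra_simps)
  have denominator: "qpoch (w * q ^ Suc j) q (Suc m - j)
      = (1 - w * q ^ Suc j) * qpoch (w * q * q ^ Suc j) q (m - j)"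
    using assms by (simp add: Suc_diff_le qpoch_Suc_shift mult_ac)
  have "q ^ j * (1 + t * w * q ^ Suc j) * expansion_coeff q t w (Suc m) j
      = (w * q) ^ j * q ^ j\<^sup>2 * (qpoch (- (t * w * q)) q j * (1 + t * w * q ^ Suc j))
        * qpoch (w * q ^ Suc j) q (Suc m - j)"
    by (simp add: expansion_coeff_def power_mult_distrib mult_ac)
  also have "\<dots> = (w * q) ^ j * q ^ j\<^sup>2 * ((1 + t * w * q) * qpoch (- (t * (w * q) * q)) q j)
        * ((1 - w * q ^ Suc j) * qpoch (w * q * q ^ Suc j) q (m - j))"
    by (simp only: numerator denominator)
  also have "\<dots> = (1 + t * w * q) * (1 - w * q ^ Suc j) * expansion_coeff q t (w * q) m j"
    by (simp add: expansion_coeff_def mult_ac)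
  finally show ?thesis .
qed

lemma expansion_sum_Suc:
  fixes q t w :: "'a::comm_ring_1"
  shows "(\<Sum>k\<le>Suc m. expansion_coeff q t w (Suc m) k
      * (ovgauss q t (int (Suc m)) (int k) + t * w * q ^ (2 * k + 1) * ovgauss q t (int m) (int k)))
    = (1 + t * w * q) * (\<Sum>k\<le>m. expansion_coeff q t (w * q) m k
      * (ovgauss q t (int m) (int k) + t * (w * q) * q ^ (2 * k + 1) * ovgauss q t (int m - 1) (int k)))"
proof -
  define p where "p k = expansion_coeff q t w (Suc m) k" for k
  define c where "c k = expansion_coeff q t (w * q) m k" for k
  define G where "G k = ovgauss q t (int (Suc m)) (int k)" for k
  define u where "u k = ovgauss q t (int m) (int k)" for k
  define v where "v k = ovgauss q t (int m - 1) (int k)" for k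
  have q_double: "q ^ (2 * k + 1) = q ^ k * q ^ Suc k" for k
    by (simp add: mult_2 power_add)
  have "p k * (G k + t * w * q ^ (2 * k + 1) * u k)
      = q ^ k * (1 + t * w * q ^ Suc k) * p k * u k + p k * (G k - q ^ k * u k)" for k
    unfolding q_double by (simp add: algebra_simps)
  then have "(\<Sum>k\<le>Suc m. p k * (G k + t * w * q ^ (2 * k + 1) * u k))
      = (\<Sum>k\<le>Suc m. q ^ k * (1 + t * w * q ^ Suc k) * p k * u k)
        + (\<Sum>k\<le>Suc m. p k * (G k - q ^ k * u k))"
    by (simp only: sum.distrib)
  also have "(\<Sum>k\<le>Suc m. q ^ k * (1 + t * w * q ^ Suc k) * p k * u k)
      = (\<Sum>k\<le>m. (1 + t * w * q) * c k * ((1 - w * q ^ Suc k) * u k))"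
  proof -
    have "u (Suc m) = 0"
      by (simp add: u_def ovgauss_eq_0)
    then have "(\<Sum>k\<le>Suc m. q ^ k * (1 + t * w * q ^ Suc k) * p k * u k)
        = (\<Sum>k\<le>m. q ^ k * (1 + t * w * q ^ Suc k) * p k * u k)"
      by simp
    also have "\<dots> = (\<Sum>k\<le>m. (1 + t * w * q) * c k * ((1 - w * q ^ Suc k) * u k))"
    proof (rule sum.cong)
      fix k
      assume "k \<in> {..m}"
      then have "q ^ k * (1 + t * w * q ^ Suc k) * p k = (1 + t * w * q) * (1 - w * q ^ Suc k) * c k"
        unfolding p_def c_def by (intro expansion_coeff_Suc) simp
      then show "q ^ k * (1 + t * w * q ^ Suc k) * p k * u k = (1 + t * w * q) * c k * ((1 - w * q ^ Suc k) * u k)"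
        by (simp only: ac_simps)
    qed simp
    finally show ?thesis .
  qed
  also have "(\<Sum>k\<le>Suc m. p k * (G k - q ^ k * u k))
      = (\<Sum>k\<le>m. (1 + t * w * q) * c k * (w * q ^ Suc k * (u k + q ^ Suc k * t * v k)))"
  proof -
    have "G 0 = u 0"
      by (simp add: G_def u_def ovgauss_0_right)
    moreover have "G (Suc k) - q ^ Suc k * u (Suc k) = u k + q ^ Suc k * t * v k" for k
      unfolding G_def u_def v_def ovgauss_Suc_Suc by (simp add: algebra_simps)
    moreover have "p (Suc k) = (1 + t * w * q) * (w * q ^ Suc k) * c k" for k
      unfolding p_def c_def by (rule expansion_coeff_Suc_Suc)
    ultimately show ?thesis
      by (simp only: sum.atMost_Suc_shift mult_ac power_0 mult_1_left mult_1_right diff_self mult_zero_left mult_zero_right add_0_left)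
  qed
  also have "(\<Sum>k\<le>m. (1 + t * w * q) * c k * ((1 - w * q ^ Suc k) * u k))
      + (\<Sum>k\<le>m. (1 + t * w * q) * c k * (w * q ^ Suc k * (u k + q ^ Suc k * t * v k)))
      = (1 + t * w * q) * (\<Sum>k\<le>m. c k * (u k + t * (w * q) * q ^ (2 * k + 1) * v k))"
    unfolding sum.distrib[symmetric] sum_distrib_left q_double by (rule sum.cong) (simp_all add: algebra_simps)
  finally show ?thesis
    by (simp only: p_def c_def G_def u_def v_def)
qed

lemma qpoch_ovgauss_expansion:
  fixes q t w :: "'a::comm_ring_1"
  shows "qpoch (- (t * w * q)) q m = (\<Sum>k\<le>m. expansion_coeff q t w m k
      * (ovgauss q t (int m) (int k) + t * w * q ^ (2 * k + 1) * ovgauss q t (int m - 1) (int k)))"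
proof (induction m arbitrary: w)
  case 0
  show ?case
    using ovgauss_diag[of q t 0] by (simp add: expansion_coeff_def ovgauss_eq_0)
next
  case (Suc m)
  have "qpoch (- (t * w * q)) q (Suc m) = (1 + t * w * q) * qpoch (- (t * (w * q) * q)) q m"
    by (simp add: qpoch_Suc_shift mult_ac)
  then show ?case
    unfolding Suc.IH expansion_sum_Suc[symmetric] by simp
qed

lemma ovbox_fps_recurrence:
  "(1 - fps_const (c * q ^ Suc m) * fps_X) * Abs_fps (\<lambda>N. ovbox q t (Suc m) N * c ^ N)
     = (1 + fps_const (t * c * q ^ Suc m) * fps_X) * Abs_fps (\<lambda>N. ovbox q t m N * c ^ N)"
proof (rule fps_ext)
  fix N
  show "fps_nth ((1 - fps_const (c * q ^ Suc m) * fps_X) * Abs_fps (\<lambda>N. ovbox q t (Suc m) N * c ^ N)) N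
      = fps_nth ((1 + fps_const (t * c * q ^ Suc m) * fps_X) * Abs_fps (\<lambda>N. ovbox q t m N * c ^ N)) N"
    by (cases N) (simp_all add: ring_distribs mult.assoc ovbox_Suc_Suc_largest_part algebra_simps)
qed

lemma fps_const_X_times_const:
  fixes a b :: "'a::comm_ring_1"
  shows "fps_const a * fps_X * fps_const b = fps_const (a * b) * fps_X"
  by (rule fps_ext) (simp add: mult_ac)

lemma ovbox_generating_function:
  "qpoch (fps_const c * fps_X) (fps_const q) (Suc m) * Abs_fps (\<lambda>N. ovbox q t m N * c ^ N)
     = qpoch (- fps_const (t * c * q) * fps_X) (fps_const q) m"
proof (induction m)
  case 0
  have "(1 - fps_const c * fps_X) * Abs_fps (\<lambda>N. c ^ N) = 1"
    by (rule fps_ext) (simp add: ring_distribs mult.assoc power_eq_if)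
  then show ?case
    by (simp add: qpoch_Suc)
next
  case (Suc m)
  let ?F = "\<lambda>m. Abs_fps (\<lambda>N. ovbox q t m N * c ^ N)"
  have denominator: "qpoch (fps_const c * fps_X) (fps_const q) (Suc (Suc m))
      = qpoch (fps_const c * fps_X) (fps_const q) (Suc m) * (1 - fps_const (c * q ^ Suc m) * fps_X)"
    unfolding qpoch_Suc[of _ _ "Suc m"] fps_const_power fps_const_X_times_const ..
  have numerator: "qpoch (- fps_const (t * c * q) * fps_X) (fps_const q) (Suc m)
      = qpoch (- fps_const (t * c * q) * fps_X) (fps_const q) m * (1 + fps_const (t * c * q ^ Suc m) * fps_X)"
    unfolding qpoch_Suc fps_const_power minus_mult_left[symmetric] fps_const_X_times_const
    by (simp add: mult_ac)
  have "qpoch (fps_const c * fps_X) (fps_const q) (Suc (Suc m)) * ?F (Suc m)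
      = qpoch (fps_const c * fps_X) (fps_const q) (Suc m) * ((1 - fps_const (c * q ^ Suc m) * fps_X) * ?F (Suc m))"
    unfolding denominator by (rule mult.assoc)
  also have "\<dots> = (qpoch (fps_const c * fps_X) (fps_const q) (Suc m) * ?F m) * (1 + fps_const (t * c * q ^ Suc m) * fps_X)"
    unfolding ovbox_fps_recurrence by (simp only: mult_ac)
  also have "\<dots> = qpoch (- fps_const (t * c * q) * fps_X) (fps_const q) (Suc m)"
    unfolding Suc.IH numerator ..
  finally show ?case .
qed

lemma ovgauss_generating_function:
  "Abs_fps (\<lambda>k. ovgauss q t (int (m + k)) (int k) * q ^ k) * qpoch (fps_const q * fps_X) (fps_const q) (Suc m)
     = qpoch (- (fps_const t * (fps_const q * fps_X) * fps_const q)) (fps_const q) m"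
proof -
  have "ovgauss q t (int (m + k)) (int k) = ovbox q t m k" for k
    by (subst ovgauss_of_nat) simp
  then have series: "Abs_fps (\<lambda>k. ovgauss q t (int (m + k)) (int k) * q ^ k) = Abs_fps (\<lambda>N. ovbox q t m N * q ^ N)"
    by simp
  have factor: "- (fps_const t * (fps_const q * fps_X) * fps_const q) = - fps_const (t * q * q) * fps_X"
    by (rule fps_ext) (simp add: mult_ac)
  show ?thesis
    unfolding series factor ovbox_generating_function[symmetric] by (rule mult.commute)
qed

lemma fps_const_sum: "fps_const (\<Sum>i\<in>A. f i) = (\<Sum>i\<in>A. fps_const (f i))"
  by (rule fps_ext) (simp add: fps_sum_nth)

lemma ovgauss_fps_const:
  "ovgauss (fps_const q) (fps_const t) a b = fps_const (ovgauss q t a b)"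
  by (simp add: ovgauss_def fps_const_sum case_prod_unfold)

lemma summand_times_qpoch:
  fixes q t :: "'a::field"
  assumes "k \<le> m"
  shows "fps_X ^ k * fps_const (q ^ (k\<^sup>2 + k)) * qpoch (- fps_const (t * q\<^sup>2) * fps_X) (fps_const q) k
      / qpoch (fps_const q * fps_X) (fps_const q) (k + 1)
      * (fps_const (ovgauss q t (int m) (int k))
         + fps_const (t * q ^ (2 * k + 2)) * fps_X * fps_const (ovgauss q t (int m - 1) (int k)))
      * qpoch (fps_const q * fps_X) (fps_const q) (Suc m)
    = expansion_coeff (fps_const q) (fps_const t) (fps_const q * fps_X) m k
      * (ovgauss (fps_const q) (fps_const t) (int m) (int k)
         + fps_const t * (fps_const q * fps_X) * fps_const q ^ (2 * k + 1)
           * ovgauss (fps_const q) (fps_const t) (int m - 1) (int k))"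
proof -
  let ?W = "fps_const q * fps_X"
  let ?D = "qpoch ?W (fps_const q) (k + 1)"
  have "qpoch ?W (fps_const q) (Suc m) = qpoch ?W (fps_const q) (Suc k + (m - k))"
    using assms by simp
  also have "\<dots> = ?D * qpoch (?W * fps_const q ^ Suc k) (fps_const q) (m - k)"
    by (simp only: qpoch_add Suc_eq_plus1)
  finally have split: "qpoch ?W (fps_const q) (Suc m) = ?D * qpoch (?W * fps_const q ^ Suc k) (fps_const q) (m - k)" .
  have cancel: "a / ?D * ?D = a" for a
    using fps_divide_unit[of ?D a] inverse_mult_eq_1[of ?D] qpoch_fps_nth_0[of ?W "fps_const q" "k + 1"]
    by (simp add: mult.assoc)
  have factor: "- fps_const (t * q\<^sup>2) * fps_X = - (fps_const t * ?W * fps_const q)"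
    by (rule fps_ext) (simp add: power2_eq_square mult_ac)
  have power: "fps_X ^ k * fps_const (q ^ (k\<^sup>2 + k)) = ?W ^ k * fps_const q ^ k\<^sup>2"
    by (simp add: power_add power_mult_distrib mult_ac)
  have bracket: "fps_const (ovgauss q t (int m) (int k))
        + fps_const (t * q ^ (2 * k + 2)) * fps_X * fps_const (ovgauss q t (int m - 1) (int k))
      = ovgauss (fps_const q) (fps_const t) (int m) (int k)
        + fps_const t * ?W * fps_const q ^ (2 * k + 1) * ovgauss (fps_const q) (fps_const t) (int m - 1) (int k)"
    unfolding ovgauss_fps_const by (rule fps_ext) (simp add: algebra_simps)
  show ?thesis
    unfolding expansion_coeff_def bracket using split cancel factor power by (simp add: ac_simps)
qed

theorem theorem1p2:
  fixes q t :: "'a::field" and n :: nat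
  assumes "n \<ge> 1"
  shows "(\<lambda>k::nat. fps_X ^ k * fps_const (q ^ (k\<^sup>2 + k))
            * qpoch (- fps_const (t * q\<^sup>2) * fps_X) (fps_const q) k
            / qpoch (fps_const q * fps_X) (fps_const q) (k + 1)
            * (fps_const (ovgauss q t (int n - 1) (int k))
               + fps_const (t * q ^ (2 * k + 2)) * fps_X
                 * fps_const (ovgauss q t (int n - 2) (int k))))
         sums Abs_fps (\<lambda>k. ovgauss q t (int n + int k - 1) (int k) * q ^ k)"
    (is "?f sums ?F")
proof -
  obtain m where n: "n = Suc m"
    using assms by (cases n) auto
  have shift: "int n - 1 = int m" "int n - 2 = int m - 1" "\<And>k. int n + int k - 1 = int (m + k)"
    by (simp_all add: n)
  let ?D = "qpoch (fps_const q * fps_X) (fps_const q) (Suc m)"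
  have "?D \<noteq> 0"
    using qpoch_fps_nth_0[of "fps_const q * fps_X" "fps_const q" "Suc m"] by auto
  have "(\<Sum>k\<le>m. ?f k) * ?D = qpoch (- (fps_const t * (fps_const q * fps_X) * fps_const q)) (fps_const q) m"
    unfolding qpoch_ovgauss_expansion sum_distrib_right shift
    by (rule sum.cong[OF refl], rule summand_times_qpoch) simp
  also have "\<dots> = ?F * ?D"
    unfolding shift by (rule ovgauss_generating_function[symmetric])
  finally have "(\<Sum>k\<le>m. ?f k) * ?D = ?F * ?D" .
  with \<open>?D \<noteq> 0\<close> have "(\<Sum>k\<le>m. ?f k) = ?F"
    by (rule mult_right_cancel[THEN iffD1])
  moreover have "?f sums (\<Sum>k\<le>m. ?f k)"
    by (rule sums_finite) (auto simp: n ovgauss_eq_0)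
  ultimately show ?thesis
    by simp
qed

end
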